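(* Let $q$ be a prime power and $k,\delta,\alpha$ positive integers with $k\ge2$, $\alpha\ge3$ and $\delta>\alpha-2$. Then, with $q,k,\delta,\alpha$ fixed and $n\to\infty$, $$B_q(n,k,\delta;\alpha)=O\!\left(q^{\left(1+\frac{1}{\lfloor\alpha/2\rfloor}\right)(k-1)n}\right).$$
   Context: For a prime power $q$, $\mathcal{G}_q(n,k)$ denotes the set of all $k$-dimensional subspaces of $\mathbb{F}_q^n$. An $\alpha$-$(n,k,\delta)_q^c$ covering Grassmannian code is a subset $\mathcal{C}\subseteq\mathcal{G}_q(n,k)$ (no repeated codewords) such that every set of $\alpha$ distinct codewords of $\mathcal{C}$ spans a subspace of $\mathbb{F}_q^n$ of dimension at least $k+\delta$. $B_q(n,k,\delta;\alpha)$ denotes the maximum size of an $\alpha$-$(n,k,\delta)_q^c$ code. The implied constant in $O(\cdot)$ may depend on $q,k,\delta,\alpha$ but not on $n$. *)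

theory Defs
  imports Main "HOL-Library.Function_Algebras" "HOL-Library.Landau_Symbols"
begin

text \<open>Vectors of F_q^n are represented as functions nat => F vanishing outside {0..<n};
  the ambient vector space is the space of all functions nat => F with pointwise operations.\<close>

definition fscale :: "'a::field \<Rightarrow> (nat \<Rightarrow> 'a) \<Rightarrow> (nat \<Rightarrow> 'a)" where
  "fscale c v = (\<lambda>i. c * v i)"

global_interpretation fv: vector_space "fscale :: 'a::field \<Rightarrow> _"
  by unfold_locales (auto simp: fscale_def algebra_simps)

definition ambient :: "nat \<Rightarrow> (nat \<Rightarrow> 'a::field) set" where
  "ambient n = {v. \<forall>i\<ge>n. v i = 0}"

definition grass :: "nat \<Rightarrow> nat \<Rightarrow> (nat \<Rightarrow> 'a::field) set set" where
  "grass n k = {U. fv.subspace U \<and> U \<subseteq> ambient n \<and> fv.dim U = k}"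

definition covering_code :: "nat \<Rightarrow> nat \<Rightarrow> nat \<Rightarrow> nat \<Rightarrow> (nat \<Rightarrow> 'a::field) set set \<Rightarrow> bool" where
  "covering_code n k \<delta> \<alpha> C \<longleftrightarrow> C \<subseteq> grass n k \<and>
     (\<forall>S \<subseteq> C. card S = \<alpha> \<longrightarrow> fv.dim (fv.span (\<Union>S)) \<ge> k + \<delta>)"

definition Bq :: "'a::{finite,field} itself \<Rightarrow> nat \<Rightarrow> nat \<Rightarrow> nat \<Rightarrow> nat \<Rightarrow> nat" where
  "Bq F n k \<delta> \<alpha> = Max {card C | C :: (nat \<Rightarrow> 'a) set set. covering_code n k \<delta> \<alpha> C}"

end

theory Submission
  imports Defs "HOL-Library.FuncSet"
begin

text \<open>Let \<open>m = \<lfloor>\<alpha>/2\<rfloor>\<close> and view a code \<open>C\<close> as a hypergraph on the \<open>(k-1)\<close>-subspaces, each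
  codeword \<open>U\<close> being the edge formed by the hyperplanes of \<open>U\<close>. Peeling off hyperplanes of degree
  \<open>< d\<close> costs at most \<open>d\<close> codewords per hyperplane, so either \<open>|C| \<le> d \<cdot> |G(n,k-1)|\<close> or a
  nonempty subfamily of minimum degree \<open>d\<close> remains. In the latter, walks of length \<open>m\<close>
  (enter a codeword through the current hyperplane, leave it through another one) number at least
  \<open>(d-m)^m\<close>. The covering property forces any \<open>\<le> \<alpha>\<close> codewords of the subfamily to span a space
  of dimension \<open>\<ge> k - 1 + (number of codewords)\<close>, whereas a walk of length \<open>m\<close> spans at most
  \<open>k - 1 + m\<close> dimensions; together this shows that the endpoint of a walk determines the set of its
  codewords, so there are at most \<open>m^m |G(n,k-1)|\<close> walks. With \<open>d \<approx> m |G(n,k-1)|^{1/m}\<close> the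
  second alternative is impossible, and \<open>|G(n,k-1)| \<le> q^{(k-1)n}\<close> gives the bound.\<close>

lemma finite_ambient: "finite (ambient n :: (nat \<Rightarrow> 'a::{finite,field}) set)"
  and card_ambient_le: "card (ambient n :: (nat \<Rightarrow> 'a::{finite,field}) set) \<le> card (UNIV :: 'a set) ^ n"
proof -
  let ?P = "PiE {..<n} (\<lambda>_. UNIV :: 'a set)"
  let ?extend = "\<lambda>f::nat \<Rightarrow> 'a. \<lambda>i. if i < n then f i else 0"
  have sub: "ambient n \<subseteq> ?extend ` ?P"
  proof
    fix v :: "nat \<Rightarrow> 'a" assume "v \<in> ambient n"
    hence "v = ?extend (restrict v {..<n})" by (auto simp: ambient_def fun_eq_iff)
    moreover have "restrict v {..<n} \<in> ?P" by auto
    ultimately show "v \<in> ?extend ` ?P" by blast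
  qed
  have fin: "finite ?P" by (simp add: finite_PiE)
  thus "finite (ambient n :: (nat \<Rightarrow> 'a) set)" using sub finite_subset by blast
  have "card (ambient n :: (nat \<Rightarrow> 'a) set) \<le> card (?extend ` ?P)" using sub fin by (simp add: card_mono)
  also have "\<dots> \<le> card ?P" using card_image_le fin by blast
  also have "\<dots> = card (UNIV :: 'a set) ^ n" by (simp add: card_PiE)
  finally show "card (ambient n :: (nat \<Rightarrow> 'a) set) \<le> card (UNIV :: 'a set) ^ n" .
qed

lemma ambient_basis_exists:
  fixes S :: "(nat \<Rightarrow> 'a::{finite,field}) set"
  assumes "S \<subseteq> ambient n"
  obtains B where "finite B" "B \<subseteq> S" "fv.independent B" "S \<subseteq> fv.span B" "card B = fv.dim S"
proof -
  obtain B where "B \<subseteq> S" "fv.independent B" "S \<subseteq> fv.span B" "card B = fv.dim S"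
    using fv.basis_exists by blast
  moreover have "finite B"
    using \<open>B \<subseteq> S\<close> assms by (blast intro: finite_subset[OF _ finite_ambient])
  ultimately show thesis using that by blast
qed

lemma dim_le_if_subset_span:
  fixes A B :: "(nat \<Rightarrow> 'a::{finite,field}) set"
  assumes "A \<subseteq> fv.span B" "B \<subseteq> ambient n"
  shows "fv.dim A \<le> fv.dim B"
proof -
  obtain BB where BB: "finite BB" "BB \<subseteq> B" "fv.independent BB" "B \<subseteq> fv.span BB" "card BB = fv.dim B"
    by (rule ambient_basis_exists[OF assms(2)])
  have "A \<subseteq> fv.span BB" using assms(1) BB(4) by (metis fv.span_mono fv.span_span subset_trans)
  hence "fv.dim A \<le> card BB" using BB(1) by (rule fv.dim_le_card)
  thus ?thesis using BB(5) by simp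
qed

lemma dim_Un_le:
  fixes B X :: "(nat \<Rightarrow> 'a::{finite,field}) set"
  assumes "B \<subseteq> ambient n" "finite X"
  shows "fv.dim (B \<union> X) \<le> fv.dim B + card X"
proof -
  obtain BB where BB: "finite BB" "BB \<subseteq> B" "fv.independent BB" "B \<subseteq> fv.span BB" "card BB = fv.dim B"
    by (rule ambient_basis_exists[OF assms(1)])
  have "B \<union> X \<subseteq> fv.span (BB \<union> X)"
    using BB(4) fv.span_mono[of BB "BB \<union> X"] fv.span_superset[of "BB \<union> X"] by blast
  hence "fv.dim (B \<union> X) \<le> card (BB \<union> X)" using fv.dim_le_card BB(1) assms(2) by blast
  also have "\<dots> \<le> card BB + card X" by (rule card_Un_le)
  finally show ?thesis using BB(5) by simp
qed

lemma independent_card_le_dim_ambient: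
  fixes S X :: "(nat \<Rightarrow> 'a::{finite,field}) set"
  assumes "fv.independent S" "S \<subseteq> X" "X \<subseteq> ambient n"
  shows "card S \<le> fv.dim X"
proof -
  obtain BB where BB: "finite BB" "BB \<subseteq> X" "fv.independent BB" "X \<subseteq> fv.span BB" "card BB = fv.dim X"
    by (rule ambient_basis_exists[OF assms(3)])
  show ?thesis using fv.independent_span_bound[OF BB(1) assms(1)] assms(2) BB by auto
qed

lemma independent_insert_card_le_dim:
  fixes X :: "(nat \<Rightarrow> 'a::{finite,field}) set"
  assumes "X \<subseteq> ambient n" "fv.independent B" "finite B" "B \<subseteq> X" "y \<in> X" "y \<notin> fv.span B"
  shows "card B + 1 \<le> fv.dim X"
proof -
  have "fv.independent (insert y B)" using assms(2,6) fv.independent_insertI by blast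
  hence "card (insert y B) \<le> fv.dim X"
    using independent_card_le_dim_ambient assms(1,4,5) by (metis insert_subset)
  moreover have "y \<notin> B" using assms(6) fv.span_base by blast
  ultimately show ?thesis using assms(3) by simp
qed

lemma grass_subset_ambient: "U \<in> grass n k \<Longrightarrow> U \<subseteq> ambient n"
  and grass_subspace: "U \<in> grass n k \<Longrightarrow> fv.subspace U"
  and grass_dim: "U \<in> grass n k \<Longrightarrow> fv.dim U = k"
  by (auto simp: grass_def)

lemma grass_basis_exists:
  fixes U :: "(nat \<Rightarrow> 'a::{finite,field}) set"
  assumes "U \<in> grass n k"
  obtains B where "finite B" "B \<subseteq> U" "fv.independent B" "fv.span B = U" "card B = k"
proof -
  obtain B where B: "finite B" "B \<subseteq> U" "fv.independent B" "U \<subseteq> fv.span B" "card B = fv.dim U"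
    by (rule ambient_basis_exists[OF grass_subset_ambient[OF assms]])
  moreover have "fv.span B = U" using B(2,4) grass_subspace[OF assms] fv.span_subspace by blast
  ultimately show thesis using that grass_dim[OF assms] by simp
qed

lemma grass_eq_if_subset:
  fixes V U :: "(nat \<Rightarrow> 'a::{finite,field}) set"
  assumes "V \<in> grass n k" "U \<in> grass n k" "V \<subseteq> U"
  shows "V = U"
proof (rule ccontr)
  assume "V \<noteq> U"
  then obtain y where y: "y \<in> U" "y \<notin> V" using assms(3) by blast
  obtain BV where BV: "finite BV" "BV \<subseteq> V" "fv.independent BV" "fv.span BV = V" "card BV = k"
    by (rule grass_basis_exists[OF assms(1)])
  have "y \<notin> fv.span BV" using BV(4) y(2) by simp
  hence "card BV + 1 \<le> fv.dim U"
    using independent_insert_card_le_dim[OF grass_subset_ambient[OF assms(2)] BV(3,1)] BV(2) assms(3) y(1)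
    by blast
  thus False using grass_dim[OF assms(2)] BV(5) by simp
qed

lemma finite_grass: "finite (grass n k :: (nat \<Rightarrow> 'a::{finite,field}) set set)"
proof -
  have "grass n k \<subseteq> Pow (ambient n :: (nat \<Rightarrow> 'a) set)" by (auto simp: grass_def)
  thus ?thesis using finite_ambient finite_Pow_iff finite_subset by metis
qed

lemma card_grass_le:
  "card (grass n k :: (nat \<Rightarrow> 'a::{finite,field}) set set) \<le> card (UNIV :: 'a set) ^ (k * n)"
proof -
  let ?L = "{xs. set xs \<subseteq> (ambient n :: (nat \<Rightarrow> 'a) set) \<and> length xs = k}"
  have "grass n k \<subseteq> (\<lambda>xs. fv.span (set xs)) ` ?L"
  proof
    fix U :: "(nat \<Rightarrow> 'a) set" assume U: "U \<in> grass n k"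
    obtain BU where BU: "finite BU" "BU \<subseteq> U" "fv.independent BU" "fv.span BU = U" "card BU = k"
      by (rule grass_basis_exists[OF U])
    obtain xs where xs: "set xs = BU" "distinct xs" using finite_distinct_list[OF BU(1)] by blast
    have "length xs = k" using xs BU(5) distinct_card by metis
    thus "U \<in> (\<lambda>xs. fv.span (set xs)) ` ?L" using xs BU(2,4) grass_subset_ambient[OF U] by auto
  qed
  hence "card (grass n k :: (nat \<Rightarrow> 'a) set set) \<le> card ((\<lambda>xs. fv.span (set xs)) ` ?L)"
    by (intro card_mono finite_imageI finite_lists_length_eq finite_ambient)
  also have "\<dots> \<le> card ?L" using card_image_le finite_lists_length_eq[OF finite_ambient] by blast
  also have "\<dots> = card (ambient n :: (nat \<Rightarrow> 'a) set) ^ k"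
    using card_lists_length_eq[OF finite_ambient] by blast
  also have "\<dots> \<le> (card (UNIV :: 'a set) ^ n) ^ k" using card_ambient_le power_mono by blast
  finally show ?thesis by (simp add: power_mult[symmetric] mult.commute)
qed

lemma grass_not_subset_hyperplane:
  fixes U W :: "(nat \<Rightarrow> 'a::{finite,field}) set"
  assumes "U \<in> grass n k" "W \<in> grass n (k - 1)" "k \<ge> 1"
  shows "\<exists>x\<in>U. x \<notin> W"
proof (rule ccontr)
  assume "\<not> ?thesis"
  hence "U \<subseteq> fv.span W" using fv.span_superset by blast
  hence "fv.dim U \<le> fv.dim W" using dim_le_if_subset_span grass_subset_ambient[OF assms(2)] by blast
  thus False using assms(3) grass_dim[OF assms(1)] grass_dim[OF assms(2)] by simp
qed

lemma grass_subset_span_insert_hyperplane: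
  fixes U W :: "(nat \<Rightarrow> 'a::{finite,field}) set"
  assumes "U \<in> grass n k" "W \<in> grass n (k - 1)" "k \<ge> 1" "W \<subseteq> U" "x \<in> U" "x \<notin> W"
  shows "U \<subseteq> fv.span (insert x W)"
proof
  fix y assume y: "y \<in> U"
  obtain BW where BW: "finite BW" "BW \<subseteq> W" "fv.independent BW" "fv.span BW = W" "card BW = k - 1"
    by (rule grass_basis_exists[OF assms(2)])
  note span_BW = BW(4)
  have indep: "fv.independent (insert x BW)" using span_BW assms(6) BW(3) fv.independent_insertI by blast
  have "x \<notin> BW" using BW(2) assms(6) by blast
  hence "\<not> card (insert x BW) + 1 \<le> fv.dim U" using BW(1,5) assms(3) grass_dim[OF assms(1)] by simp
  moreover have "insert x BW \<subseteq> U" using BW(2) assms(4,5) by blast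
  ultimately have "y \<in> fv.span (insert x BW)"
    using independent_insert_card_le_dim[OF grass_subset_ambient[OF assms(1)] indep] BW(1) y by blast
  thus "y \<in> fv.span (insert x W)" by (metis span_BW fv.span_insert fv.span_span)
qed

lemma grass_subset_span_two_hyperplanes:
  fixes U W1 W2 B :: "(nat \<Rightarrow> 'a::{finite,field}) set"
  assumes "U \<in> grass n k" "W1 \<in> grass n (k - 1)" "W2 \<in> grass n (k - 1)" "k \<ge> 1"
    "W1 \<subseteq> U" "W2 \<subseteq> U" "W1 \<noteq> W2" "W1 \<subseteq> fv.span B" "W2 \<subseteq> fv.span B"
  shows "U \<subseteq> fv.span B"
proof -
  obtain y where y: "y \<in> W2" "y \<notin> W1" using grass_eq_if_subset[OF assms(3,2)] assms(7) by blast
  have "U \<subseteq> fv.span (insert y W1)"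
    using grass_subset_span_insert_hyperplane[OF assms(1,2,4,5)] y assms(6) by blast
  also have "\<dots> \<subseteq> fv.span B"
    using assms(8,9) y fv.span_minimal[of "insert y W1" "fv.span B"] by auto
  finally show ?thesis .
qed

lemma exists_hyperplane_ne:
  fixes U :: "(nat \<Rightarrow> 'a::{finite,field}) set"
  assumes "U \<in> grass n k" "k \<ge> 2"
  shows "\<exists>W \<in> grass n (k - 1). W \<subseteq> U \<and> W \<noteq> W'"
proof -
  obtain BU where BU: "finite BU" "BU \<subseteq> U" "fv.independent BU" "fv.span BU = U" "card BU = k"
    by (rule grass_basis_exists[OF assms(1)])
  have "\<not> card BU \<le> Suc 0" using BU(5) assms(2) by simp
  then obtain b1 b2 where b: "b1 \<in> BU" "b2 \<in> BU" "b1 \<noteq> b2"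
    using card_le_Suc0_iff_eq[OF BU(1)] by blast
  have hyperplane: "fv.span (BU - {b}) \<in> grass n (k - 1) \<and> fv.span (BU - {b}) \<subseteq> U" if "b \<in> BU" for b
  proof -
    have "fv.independent (BU - {b})" using BU(3) fv.independent_mono by blast
    hence "fv.dim (fv.span (BU - {b})) = card (BU - {b})" by (rule fv.dim_span_eq_card_independent)
    hence "fv.dim (fv.span (BU - {b})) = k - 1" using BU(1,5) that by simp
    moreover have "fv.span (BU - {b}) \<subseteq> U" using BU(2) grass_subspace[OF assms(1)] fv.span_minimal by blast
    ultimately show ?thesis using grass_subset_ambient[OF assms(1)] by (auto simp: grass_def)
  qed
  have "b2 \<in> fv.span (BU - {b1})" using b by (intro fv.span_base) blast
  moreover have "b2 \<notin> fv.span (BU - {b2})" using BU(3) b(2) fv.dependent_def by metis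
  ultimately have "fv.span (BU - {b1}) \<noteq> fv.span (BU - {b2})" by blast
  thus ?thesis using hyperplane[OF b(1)] hyperplane[OF b(2)] by blast
qed

lemma dim_Un_grass_le_Suc:
  fixes S U W :: "(nat \<Rightarrow> 'a::{finite,field}) set"
  assumes "S \<subseteq> ambient n" "U \<in> grass n k" "W \<in> grass n (k - 1)" "k \<ge> 1" "W \<subseteq> U" "W \<subseteq> fv.span S"
  shows "fv.dim (S \<union> U) \<le> fv.dim S + 1"
proof -
  obtain x where x: "x \<in> U" "x \<notin> W" using grass_not_subset_hyperplane[OF assms(2,3,4)] by blast
  have "U \<subseteq> fv.span (insert x W)" using grass_subset_span_insert_hyperplane[OF assms(2,3,4,5) x] .
  also have "\<dots> \<subseteq> fv.span (S \<union> {x})"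
    using assms(6) fv.span_superset[of "S \<union> {x}"] fv.span_mono[of S "S \<union> {x}"]
      fv.span_minimal[of "insert x W" "fv.span (S \<union> {x})"] by auto
  finally have "S \<union> U \<subseteq> fv.span (S \<union> {x})" using fv.span_superset[of "S \<union> {x}"] by blast
  moreover have "S \<union> {x} \<subseteq> ambient n" using assms(1,2) x(1) grass_subset_ambient by blast
  ultimately have "fv.dim (S \<union> U) \<le> fv.dim (S \<union> {x})" using dim_le_if_subset_span by blast
  also have "\<dots> \<le> fv.dim S + card {x}" using dim_Un_le[OF assms(1)] by blast
  finally show ?thesis by simp
qed

lemma dim_Un_Union_through_hyperplane_le:
  fixes S W :: "(nat \<Rightarrow> 'a::{finite,field}) set"
  assumes "S \<subseteq> ambient n" "W \<in> grass n (k - 1)" "k \<ge> 1" "W \<subseteq> fv.span S"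
    and "finite R" "\<forall>U\<in>R. U \<in> grass n k \<and> W \<subseteq> U"
  shows "fv.dim (S \<union> \<Union>R) \<le> fv.dim S + card R"
  using assms(5,6)
proof (induction R rule: finite_induct)
  case (insert U R)
  have "S \<union> \<Union>R \<subseteq> ambient n" using assms(1) insert.prems grass_subset_ambient by blast
  moreover have "W \<subseteq> fv.span (S \<union> \<Union>R)" using assms(4) fv.span_mono[of S "S \<union> \<Union>R"] by blast
  ultimately have "fv.dim ((S \<union> \<Union>R) \<union> U) \<le> fv.dim (S \<union> \<Union>R) + 1"
    using dim_Un_grass_le_Suc[of _ n U k W] insert.prems assms(2,3) by blast
  moreover have "S \<union> \<Union>(insert U R) = (S \<union> \<Union>R) \<union> U" by blast
  ultimately show ?case using insert by simp
qed simp

lemma card_set_prefix_Diff_less: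
  assumes "distinct (pre @ x # post)" "x \<notin> A"
  shows "card (set pre - A) < card (set (pre @ x # post) - A)"
proof (rule psubset_card_mono)
  show "set pre - A \<subset> set (pre @ x # post) - A" using assms by auto
qed simp

locale cov_code =
  fixes n k \<delta> \<alpha> :: nat and C :: "(nat \<Rightarrow> 'a::{finite,field}) set set"
  assumes k_ge_2: "k \<ge> 2" and alpha_ge_3: "\<alpha> \<ge> 3" and alpha_le: "\<alpha> \<le> \<delta> + 1"
    and code: "covering_code n k \<delta> \<alpha> C"
begin

abbreviation hyperplanes :: "(nat \<Rightarrow> 'a) set set" where
  "hyperplanes \<equiv> grass n (k - 1)"

definition deg :: "(nat \<Rightarrow> 'a) set set \<Rightarrow> (nat \<Rightarrow> 'a) set \<Rightarrow> nat" where
  "deg D W = card {U \<in> D. W \<subseteq> U}"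

definition covered :: "(nat \<Rightarrow> 'a) set set \<Rightarrow> (nat \<Rightarrow> 'a) set set" where
  "covered D = {W \<in> hyperplanes. \<exists>U\<in>D. W \<subseteq> U}"

definition min_deg :: "nat \<Rightarrow> (nat \<Rightarrow> 'a) set set \<Rightarrow> bool" where
  "min_deg d D \<longleftrightarrow> (\<forall>W\<in>covered D. d \<le> deg D W)"

lemma k_ge_1: "k \<ge> 1" using k_ge_2 by simp

lemma code_subset_grass: "C \<subseteq> grass n k" using code by (simp add: covering_code_def)

lemma finite_code: "finite C" by (rule finite_subset[OF code_subset_grass finite_grass])

lemma dim_Union_code: "S \<subseteq> C \<Longrightarrow> card S = \<alpha> \<Longrightarrow> k + \<delta> \<le> fv.dim (\<Union>S)"
  using code fv.dim_span by (simp add: covering_code_def)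

lemma Union_subset_ambient: "D \<subseteq> C \<Longrightarrow> S \<subseteq> D \<Longrightarrow> \<Union>S \<subseteq> ambient n"
  using code_subset_grass grass_subset_ambient by blast

lemma finite_covered: "finite (covered D)"
  by (rule finite_subset[OF _ finite_grass]) (auto simp: covered_def)

text \<open>Repeatedly delete the codewords through a hyperplane of degree \<open>< d\<close>.\<close>

lemma exists_min_deg_subset:
  assumes "finite D"
  shows "\<exists>D'\<subseteq>D. min_deg d D' \<and> card D \<le> card D' + d * card (covered D - covered D')"
  using assms
proof (induction D rule: finite_psubset_induct)
  case (psubset D)
  show ?case
  proof (cases "min_deg d D")
    case True
    thus ?thesis by auto
  next
    case False
    then obtain W where W: "W \<in> covered D" "deg D W < d" by (auto simp: min_deg_def not_le)
    define D1 where "D1 = D - {U\<in>D. W \<subseteq> U}"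
    have "D1 \<subset> D" using W(1) by (auto simp: D1_def covered_def)
    with psubset.IH obtain D' where D': "D' \<subseteq> D1" "min_deg d D'"
      "card D1 \<le> card D' + d * card (covered D1 - covered D')" by blast
    have through_W: "{U\<in>D. W \<subseteq> U} \<subseteq> D" "finite {U\<in>D. W \<subseteq> U}" using psubset.hyps by auto
    have "card D = card D1 + deg D W"
      unfolding D1_def deg_def using card_Diff_subset[OF through_W(2,1)] card_mono[OF psubset.hyps through_W(1)]
      by simp
    moreover have "d * (card (covered D1 - covered D') + 1) \<le> d * card (covered D - covered D')"
    proof (rule mult_le_mono2)
      have "insert W (covered D1 - covered D') \<subseteq> covered D - covered D'" "W \<notin> covered D1"
        using D'(1) W(1) by (auto simp: covered_def D1_def)
      hence "card (insert W (covered D1 - covered D')) \<le> card (covered D - covered D')"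
        "W \<notin> covered D1 - covered D'"
        by (blast intro: card_mono finite_Diff finite_covered)+
      thus "card (covered D1 - covered D') + 1 \<le> card (covered D - covered D')"
        using finite_covered by simp
    qed
    ultimately have "card D \<le> card D' + d * card (covered D - covered D')"
      using D'(3) W(2) by (simp add: algebra_simps)
    thus ?thesis using D' \<open>D1 \<subset> D\<close> by blast
  qed
qed

text \<open>Fill \<open>T\<close> up to \<open>\<alpha>\<close> codewords through one hyperplane \<open>W\<close> of a member of \<open>T\<close>: each of them
  adds at most one dimension to \<open>\<Union>T\<close>, while the \<open>\<alpha>\<close> of them together span \<open>k + \<delta> \<ge> k + \<alpha> - 1\<close>.\<close>

lemma dim_Union_ge:
  assumes DC: "D \<subseteq> C" and md: "min_deg d D" and "\<alpha> \<le> d"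
    and T: "T \<subseteq> D" "T \<noteq> {}" "card T \<le> \<alpha>"
  shows "k + card T \<le> fv.dim (\<Union>T) + 1"
proof -
  have finT: "finite T" using T(1) DC by (blast intro: finite_subset[OF _ finite_code])
  obtain U where U: "U \<in> T" using T(2) by blast
  have UG: "U \<in> grass n k" using U T(1) DC code_subset_grass by blast
  obtain W where W: "W \<in> hyperplanes" "W \<subseteq> U" using exists_hyperplane_ne[OF UG k_ge_2] by blast
  have "W \<in> covered D" using W U T(1) by (auto simp: covered_def)
  hence "d \<le> card {U'\<in>D. W \<subseteq> U'}" using md by (auto simp: min_deg_def deg_def)
  moreover have "card {U'\<in>D. W \<subseteq> U'} - card T \<le> card ({U'\<in>D. W \<subseteq> U'} - T)"
    by (rule diff_card_le_card_Diff) (use finT in auto)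
  ultimately have "\<alpha> - card T \<le> card ({U'\<in>D. W \<subseteq> U'} - T)" using \<open>\<alpha> \<le> d\<close> by linarith
  then obtain R where R: "R \<subseteq> {U'\<in>D. W \<subseteq> U'} - T" "card R = \<alpha> - card T" "finite R"
    by (rule obtain_subset_with_card_n)
  have RG: "U' \<in> grass n k" if "U' \<in> R" for U' using that R(1) DC code_subset_grass by blast
  have "T \<inter> R = {}" using R(1) by blast
  hence "card (T \<union> R) = \<alpha>" using card_Un_disjoint[OF finT R(3)] R(2) T(3) by simp
  moreover have "T \<union> R \<subseteq> C" using T(1) R(1) DC by blast
  ultimately have big: "k + \<delta> \<le> fv.dim (\<Union>(T \<union> R))" using dim_Union_code by blast
  have TA: "\<Union>T \<subseteq> ambient n" using Union_subset_ambient DC T(1) by blast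
  have "W \<subseteq> fv.span (\<Union>T)" using W(2) U fv.span_superset by blast
  hence "fv.dim (\<Union>(T \<union> R)) \<le> fv.dim (\<Union>T) + card R"
    unfolding Union_Un_distrib using dim_Un_Union_through_hyperplane_le[OF TA W(1) k_ge_1 _ R(3)] RG R(1)
    by blast
  thus ?thesis using big R(2) T(3) alpha_le by linarith
qed

definition other_hyperplane :: "(nat \<Rightarrow> 'a) set \<Rightarrow> (nat \<Rightarrow> 'a) set \<Rightarrow> (nat \<Rightarrow> 'a) set" where
  "other_hyperplane U W = (SOME W'. W' \<in> hyperplanes \<and> W' \<subseteq> U \<and> W' \<noteq> W)"

lemma other_hyperplane:
  "U \<in> grass n k \<Longrightarrow>
    other_hyperplane U W \<in> hyperplanes \<and> other_hyperplane U W \<subseteq> U \<and> other_hyperplane U W \<noteq> W"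
  unfolding other_hyperplane_def using exists_hyperplane_ne[OF _ k_ge_2, of U n W]
  by (metis (mono_tags, lifting) someI_ex)

text \<open>A walk from the hyperplane \<open>v\<close> is a list of distinct codewords, the most recent first; each
  codeword contains the hyperplane reached before it and is left through \<open>other_hyperplane\<close>.\<close>

primrec walk_end :: "(nat \<Rightarrow> 'a) set \<Rightarrow> (nat \<Rightarrow> 'a) set list \<Rightarrow> (nat \<Rightarrow> 'a) set" where
  "walk_end v [] = v"
| "walk_end v (U # ws) = other_hyperplane U (walk_end v ws)"

primrec is_walk :: "(nat \<Rightarrow> 'a) set set \<Rightarrow> (nat \<Rightarrow> 'a) set \<Rightarrow> (nat \<Rightarrow> 'a) set list \<Rightarrow> bool" where
  "is_walk D v [] = True"
| "is_walk D v (U # ws) = (is_walk D v ws \<and> U \<in> D \<and> walk_end v ws \<subseteq> U \<and> U \<notin> set ws)"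

context
  fixes D :: "(nat \<Rightarrow> 'a) set set" and v :: "(nat \<Rightarrow> 'a) set"
  assumes DC: "D \<subseteq> C" and vH: "v \<in> hyperplanes"
begin

lemma is_walk_subset: "is_walk D v ws \<Longrightarrow> set ws \<subseteq> D" by (induction ws) auto
lemma is_walk_distinct: "is_walk D v ws \<Longrightarrow> distinct ws" by (induction ws) auto
lemma is_walk_grass: "is_walk D v ws \<Longrightarrow> U \<in> set ws \<Longrightarrow> U \<in> grass n k"
  using is_walk_subset DC code_subset_grass by blast
lemma is_walk_appendD: "is_walk D v (xs @ ys) \<Longrightarrow> is_walk D v ys" by (induction xs) auto

lemma walk_end_hyperplane: "is_walk D v ws \<Longrightarrow> walk_end v ws \<in> hyperplanes"
proof (induction ws)
  case Nil thus ?case using vH by simp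
next
  case (Cons U ws)
  have "U \<in> grass n k" using is_walk_grass[OF Cons.prems] by simp
  thus ?case using other_hyperplane by simp
qed

lemma walk_end_Cons: "is_walk D v (U # ws) \<Longrightarrow>
   walk_end v (U # ws) \<subseteq> U \<and> walk_end v (U # ws) \<noteq> walk_end v ws \<and> walk_end v ws \<subseteq> U \<and> U \<in> grass n k"
  using is_walk_grass[of "U # ws" U] other_hyperplane[of U "walk_end v ws"] by auto

lemma walk_end_subset: "is_walk D v ws \<Longrightarrow> walk_end v ws \<subseteq> v \<union> \<Union>(set ws)"
  by (cases ws) (use walk_end_Cons in auto)

lemma start_subset_Union_walk: "is_walk D v ws \<Longrightarrow> ws \<noteq> [] \<Longrightarrow> v \<subseteq> \<Union>(set ws)"
proof (induction ws)
  case Nil thus ?case by simp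
next
  case (Cons U ws)
  show ?case
  proof (cases "ws = []")
    case True thus ?thesis using walk_end_Cons[OF Cons.prems(1)] by auto
  next
    case False thus ?thesis using Cons by auto
  qed
qed

lemma start_subset_ambient: "v \<subseteq> ambient n" using vH grass_subset_ambient by blast

lemma dim_walk_le: "is_walk D v ws \<Longrightarrow> fv.dim (v \<union> \<Union>(set ws)) \<le> (k - 1) + length ws"
proof (induction ws)
  case Nil thus ?case using grass_dim[OF vH] by simp
next
  case (Cons U ws)
  have vw: "is_walk D v ws" using Cons.prems by simp
  define S where "S = v \<union> \<Union>(set ws)"
  have SA: "S \<subseteq> ambient n" unfolding S_def using start_subset_ambient Union_subset_ambient[OF DC is_walk_subset[OF vw]] by blast
  have e: "walk_end v ws \<subseteq> U" "U \<in> grass n k" using walk_end_Cons[OF Cons.prems] by auto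
  have "walk_end v ws \<subseteq> fv.span S" using walk_end_subset[OF vw] fv.span_superset[of S] unfolding S_def by blast
  hence "fv.dim (S \<union> U) \<le> fv.dim S + 1" using dim_Un_grass_le_Suc[OF SA e(2) walk_end_hyperplane[OF vw] k_ge_1 e(1)] by blast
  moreover have "v \<union> \<Union>(set (U # ws)) = S \<union> U" unfolding S_def by auto
  ultimately have "fv.dim (v \<union> \<Union>(set (U # ws))) \<le> fv.dim S + 1" by simp
  moreover have "fv.dim S \<le> k - 1 + length ws" using Cons.IH[OF vw] unfolding S_def .
  ultimately show ?case by simp
qed

text \<open>Run backwards along \<open>xs\<close> from an end hyperplane lying in \<open>span B\<close>: a codeword outside
  \<open>span B\<close> adds at most one dimension, because the hyperplane through which the walk leaves it is
  already spanned.\<close>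

lemma dim_walk_prefix_le:
  "is_walk D v (xs @ ys) \<Longrightarrow> walk_end v (xs @ ys) \<subseteq> fv.span B \<Longrightarrow> B \<subseteq> ambient n \<Longrightarrow>
   fv.dim (B \<union> \<Union>(set xs)) \<le> fv.dim B + card {Y \<in> set xs. \<not> Y \<subseteq> fv.span B}
   \<and> walk_end v ys \<subseteq> fv.span (B \<union> \<Union>(set xs))"
proof (induction xs arbitrary: B)
  case Nil thus ?case by simp
next
  case (Cons X xs1)
  have pr: "is_walk D v (X # (xs1 @ ys))" using Cons.prems(1) by simp
  have vx: "is_walk D v (xs1 @ ys)" "X \<in> D" "walk_end v (xs1 @ ys) \<subseteq> X" "X \<notin> set (xs1 @ ys)"
    using pr by auto
  have XG: "X \<in> grass n k" using vx(2) DC code_subset_grass by blast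
  define B' where "B' = B \<union> X"
  have BA': "B' \<subseteq> ambient n" unfolding B'_def using Cons.prems(3) grass_subset_ambient[OF XG] by blast
  have h1: "walk_end v (xs1 @ ys) \<subseteq> fv.span B'"
    using vx(3) fv.span_superset[of B'] unfolding B'_def by blast
  note IH = Cons.IH[OF vx(1) h1 BA']
  have eq: "B \<union> \<Union>(set (X # xs1)) = B' \<union> \<Union>(set xs1)" unfolding B'_def by auto
  have spm: "fv.span B \<subseteq> fv.span B'" unfolding B'_def by (rule fv.span_mono) blast
  have c1: "card {Y \<in> set xs1. \<not> Y \<subseteq> fv.span B'} \<le> card {Y \<in> set xs1. \<not> Y \<subseteq> fv.span B}"
    by (rule card_mono) (use spm in auto)
  have Xn: "X \<notin> set xs1" using vx(4) by simp
  show ?case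
  proof (cases "X \<subseteq> fv.span B")
    case True
    have "B' \<subseteq> fv.span B" unfolding B'_def using True fv.span_superset[of B] by blast
    hence "fv.dim B' \<le> fv.dim B" using Cons.prems(3) by (rule dim_le_if_subset_span)
    moreover have "{Y \<in> set (X # xs1). \<not> Y \<subseteq> fv.span B} = {Y \<in> set xs1. \<not> Y \<subseteq> fv.span B}"
      using True by auto
    ultimately show ?thesis using IH c1 eq by simp
  next
    case False
    have ew: "walk_end v (X # (xs1 @ ys)) \<subseteq> X" using walk_end_Cons[OF pr] by blast
    have ewB: "walk_end v (X # (xs1 @ ys)) \<subseteq> fv.span B" using Cons.prems(2) by simp
    have "fv.dim B' \<le> fv.dim B + 1"
      unfolding B'_def by (rule dim_Un_grass_le_Suc[OF Cons.prems(3) XG walk_end_hyperplane[OF pr] k_ge_1 ew ewB])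
    moreover have "{Y \<in> set (X # xs1). \<not> Y \<subseteq> fv.span B} = insert X {Y \<in> set xs1. \<not> Y \<subseteq> fv.span B}"
      using False by auto
    moreover have "card (insert X {Y \<in> set xs1. \<not> Y \<subseteq> fv.span B}) = Suc (card {Y \<in> set xs1. \<not> Y \<subseteq> fv.span B})"
      using Xn by simp
    ultimately show ?thesis using IH c1 eq by simp
  qed
qed

lemma Union_walks_subset_span:
  assumes ws: "is_walk D v ws" "ws \<noteq> []" and ws': "is_walk D v (pre @ U\<^sub>0 # post)"
    and post: "set post \<subseteq> set ws" and same_end: "walk_end v ws = walk_end v (pre @ U\<^sub>0 # post)"
  shows "\<Union>(set ws \<union> set (pre @ U\<^sub>0 # post)) \<subseteq> fv.span (\<Union>(set ws) \<union> \<Union>(set pre))"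
proof -
  define B where "B = \<Union>(set ws)"
  have BA: "B \<subseteq> ambient n" unfolding B_def using Union_subset_ambient[OF DC is_walk_subset[OF ws(1)]] .
  have vB: "v \<subseteq> B" unfolding B_def using start_subset_Union_walk[OF ws] .
  have "walk_end v (pre @ U\<^sub>0 # post) \<subseteq> fv.span B"
    using same_end walk_end_subset[OF ws(1)] vB fv.span_superset[of B] unfolding B_def by blast
  hence leave: "walk_end v (U\<^sub>0 # post) \<subseteq> fv.span (B \<union> \<Union>(set pre))"
    using dim_walk_prefix_le[OF ws' _ BA] by auto
  have U0_walk: "is_walk D v (U\<^sub>0 # post)" using is_walk_appendD[OF ws'] .
  hence "is_walk D v post" by simp
  have "\<Union>(set post) \<subseteq> B" using post unfolding B_def by blast
  hence enter: "walk_end v post \<subseteq> fv.span (B \<union> \<Union>(set pre))"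
    using walk_end_subset[OF \<open>is_walk D v post\<close>] vB fv.span_superset[of "B \<union> \<Union>(set pre)"] by blast
  have "U\<^sub>0 \<subseteq> fv.span (B \<union> \<Union>(set pre))"
    by (rule grass_subset_span_two_hyperplanes[OF _ walk_end_hyperplane[OF U0_walk]
          walk_end_hyperplane[OF \<open>is_walk D v post\<close>] k_ge_1 _ _ _ leave enter])
       (use walk_end_Cons[OF U0_walk] in auto)
  moreover have "\<Union>(set ws \<union> set (pre @ U\<^sub>0 # post)) \<subseteq> U\<^sub>0 \<union> (B \<union> \<Union>(set pre))"
    using post unfolding B_def by auto
  ultimately show ?thesis unfolding B_def using fv.span_superset by blast
qed

text \<open>Let \<open>U\<^sub>0\<close> be the last codeword of \<open>ws'\<close> outside \<open>ws\<close>. By the previous lemma the \<open>c\<close>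
  codewords of \<open>ws'\<close> outside \<open>ws\<close> raise the dimension of \<open>\<Union>ws\<close> by at most \<open>c - 1\<close>,
  contradicting \<open>dim_Union_ge\<close>.\<close>

lemma walk_set_subset_if_same_end:
  assumes md: "min_deg d D" and "\<alpha> \<le> d" and "1 \<le> m" and "2 * m \<le> \<alpha>"
    and ws: "is_walk D v ws" "length ws = m" and ws': "is_walk D v ws'" "length ws' = m"
    and same_end: "walk_end v ws = walk_end v ws'"
  shows "set ws' \<subseteq> set ws"
proof (rule ccontr)
  assume "\<not> set ws' \<subseteq> set ws"
  then obtain pre U\<^sub>0 post where
    split: "ws' = pre @ U\<^sub>0 # post" "U\<^sub>0 \<notin> set ws" "\<forall>z\<in>set post. z \<in> set ws"
    using split_list_last_prop[of ws' "\<lambda>x. x \<notin> set ws"] by blast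
  define B where "B = \<Union>(set ws)"
  define T where "T = set ws \<union> set ws'"
  have "ws \<noteq> []" using ws(2) \<open>1 \<le> m\<close> by auto
  have BA: "B \<subseteq> ambient n" unfolding B_def using Union_subset_ambient[OF DC is_walk_subset[OF ws(1)]] .
  have "v \<subseteq> B" unfolding B_def using start_subset_Union_walk[OF ws(1) \<open>ws \<noteq> []\<close>] .
  hence dim_B: "fv.dim B \<le> k - 1 + m" using dim_walk_le[OF ws(1)] ws(2) unfolding B_def
    by (simp add: Un_absorb1)
  have "walk_end v ws' \<subseteq> fv.span B"
    using same_end walk_end_subset[OF ws(1)] \<open>v \<subseteq> B\<close> fv.span_superset[of B] unfolding B_def by blast
  hence dim_pre: "fv.dim (B \<union> \<Union>(set pre)) \<le> fv.dim B + card {Y \<in> set pre. \<not> Y \<subseteq> fv.span B}"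
    using dim_walk_prefix_le[of pre "U\<^sub>0 # post" B] ws'(1) BA split(1) by auto
  have "\<Union>T \<subseteq> fv.span (B \<union> \<Union>(set pre))"
    unfolding T_def B_def split(1)
    by (rule Union_walks_subset_span[OF ws(1) \<open>ws \<noteq> []\<close>]) (use ws'(1) split same_end in auto)
  moreover have "B \<union> \<Union>(set pre) \<subseteq> ambient n"
    using BA Union_subset_ambient[OF DC] is_walk_subset[OF ws'(1)] split(1) by auto
  ultimately have dim_T: "fv.dim (\<Union>T) \<le> fv.dim (B \<union> \<Union>(set pre))" using dim_le_if_subset_span by blast
  have "{Y \<in> set pre. \<not> Y \<subseteq> fv.span B} \<subseteq> set pre - set ws"
    unfolding B_def using fv.span_superset by blast
  hence "card {Y \<in> set pre. \<not> Y \<subseteq> fv.span B} \<le> card (set pre - set ws)" by (intro card_mono) auto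
  also have "\<dots> + 1 \<le> card (set ws' - set ws)"
    using card_set_prefix_Diff_less[of pre U\<^sub>0 post "set ws"] is_walk_distinct[OF ws'(1)] split(1,2) by simp
  finally have new: "card {Y \<in> set pre. \<not> Y \<subseteq> fv.span B} + 1 \<le> card (set ws' - set ws)" by simp
  have "T = set ws \<union> (set ws' - set ws)" unfolding T_def by blast
  hence card_T: "card T = m + card (set ws' - set ws)"
    using card_Un_disjoint[of "set ws" "set ws' - set ws"] distinct_card[OF is_walk_distinct[OF ws(1)]] ws(2)
    by simp
  have "card T \<le> \<alpha>" unfolding T_def
    using card_Un_le[of "set ws" "set ws'"] card_length[of ws] card_length[of ws'] ws(2) ws'(2) \<open>2 * m \<le> \<alpha>\<close>
    by linarith
  moreover have "T \<subseteq> D" unfolding T_def using is_walk_subset[OF ws(1)] is_walk_subset[OF ws'(1)] by blast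
  moreover have "T \<noteq> {}" unfolding T_def using \<open>ws \<noteq> []\<close> by simp
  ultimately have "k + card T \<le> fv.dim (\<Union>T) + 1" using dim_Union_ge[OF DC md \<open>\<alpha> \<le> d\<close>] by blast
  thus False using dim_T dim_pre dim_B new card_T k_ge_2 by linarith
qed

lemma finite_family: "finite D" by (rule finite_subset[OF DC finite_code])

lemma finite_walks: "finite {ws. is_walk D v ws \<and> length ws = j}"
proof (rule finite_subset[OF _ finite_lists_length_eq[OF finite_family, of j]])
  show "{ws. is_walk D v ws \<and> length ws = j} \<subseteq> {xs. set xs \<subseteq> D \<and> length xs = j}"
    using is_walk_subset by blast
qed

lemma card_walks_ge:
  assumes md: "min_deg d D" and vD: "\<exists>U\<in>D. v \<subseteq> U" and jm: "j \<le> m"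
  shows "(d - m) ^ j \<le> card {ws. is_walk D v ws \<and> length ws = j}"
  using jm
proof (induction j)
  case 0
  have "{ws. is_walk D v ws \<and> length ws = 0} = {[]}" by auto
  thus ?case by simp
next
  case (Suc j)
  let ?W = "{ws. is_walk D v ws \<and> length ws = j}"
  define E where "E ws = {U\<in>D. walk_end v ws \<subseteq> U} - set ws" for ws
  have E: "d - m \<le> card (E ws)" if "ws \<in> ?W" for ws
  proof -
    have vw: "is_walk D v ws" and lw: "length ws = j" using that by auto
    have "\<exists>U\<in>D. walk_end v ws \<subseteq> U"
    proof (cases ws)
      case Nil thus ?thesis using vD by simp
    next
      case (Cons U ws1)
      thus ?thesis using walk_end_Cons[of U ws1] vw by auto
    qed
    hence "walk_end v ws \<in> covered D" using walk_end_hyperplane[OF vw] by (auto simp: covered_def)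
    hence dd: "d \<le> card {U\<in>D. walk_end v ws \<subseteq> U}" using md by (auto simp: min_deg_def deg_def)
    have "card {U\<in>D. walk_end v ws \<subseteq> U} - card (set ws) \<le> card (E ws)"
      unfolding E_def by (rule diff_card_le_card_Diff) simp
    moreover have "card (set ws) \<le> j" using card_length lw by metis
    ultimately show ?thesis using dd Suc.prems by linarith
  qed
  have finE: "finite (E ws)" for ws unfolding E_def using finite_family by simp
  have "card (Sigma ?W E) = (\<Sum>ws\<in>?W. card (E ws))"
    by (rule card_SigmaI[OF finite_walks]) (use finE in blast)
  moreover have "(\<Sum>ws\<in>?W. d - m) \<le> (\<Sum>ws\<in>?W. card (E ws))" by (rule sum_mono) (use E in blast)
  ultimately have s1: "card ?W * (d - m) \<le> card (Sigma ?W E)" by simp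
  have inj: "inj_on (\<lambda>(ws, U). U # ws) (Sigma ?W E)" by (auto simp: inj_on_def)
  have sub: "(\<lambda>(ws, U). U # ws) ` (Sigma ?W E) \<subseteq> {ws. is_walk D v ws \<and> length ws = Suc j}"
    by (auto simp: E_def)
  have "card (Sigma ?W E) \<le> card {ws. is_walk D v ws \<and> length ws = Suc j}"
    using card_mono[OF finite_walks sub] card_image[OF inj] by simp
  moreover have "(d - m) ^ j \<le> card ?W" using Suc by simp
  ultimately have "(d - m) ^ j * (d - m) \<le> card {ws. is_walk D v ws \<and> length ws = Suc j}"
    using s1 mult_le_mono1[of "(d - m) ^ j" "card ?W" "d - m"] by linarith
  thus ?case by (simp add: mult.commute)
qed

lemma card_walks_le:
  assumes S: "\<And>ws ws'. is_walk D v ws \<Longrightarrow> length ws = m \<Longrightarrow> is_walk D v ws' \<Longrightarrow> length ws' = m \<Longrightarrow>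
     walk_end v ws = walk_end v ws' \<Longrightarrow> set ws' \<subseteq> set ws"
  shows "card {ws. is_walk D v ws \<and> length ws = m} \<le> m ^ m * card hyperplanes"
proof -
  let ?W = "{ws. is_walk D v ws \<and> length ws = m}"
  define F where "F h = {ws\<in>?W. walk_end v ws = h}" for h
  have F: "card (F h) \<le> m ^ m" for h
  proof (cases "F h = {}")
    case True thus ?thesis by simp
  next
    case False
    then obtain ws0 where w0: "ws0 \<in> F h" by blast
    have "F h \<subseteq> {xs. set xs \<subseteq> set ws0 \<and> length xs = m}"
      using w0 S unfolding F_def by auto
    hence "card (F h) \<le> card {xs. set xs \<subseteq> set ws0 \<and> length xs = m}"
      by (intro card_mono finite_lists_length_eq) auto
    also have "\<dots> = card (set ws0) ^ m" by (rule card_lists_length_eq) simp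
    also have "card (set ws0) = m"
      using w0 distinct_card is_walk_distinct unfolding F_def by fastforce
    finally show ?thesis .
  qed
  have "?W \<subseteq> (\<Union>h\<in>hyperplanes. F h)" using walk_end_hyperplane unfolding F_def by blast
  hence "card ?W \<le> card (\<Union>h\<in>hyperplanes. F h)"
    by (intro card_mono finite_UN_I finite_grass) (auto simp: F_def intro: finite_subset[OF _ finite_walks])
  also have "\<dots> \<le> (\<Sum>h\<in>hyperplanes. card (F h))" by (rule card_UN_le[OF finite_grass])
  also have "\<dots> \<le> (\<Sum>h\<in>hyperplanes. m ^ m)" by (rule sum_mono) (rule F)
  finally show ?thesis by (simp add: mult.commute)
qed

end

lemma card_code_le:
  assumes da: "\<alpha> \<le> d" and m: "m = \<alpha> div 2" and big: "m ^ m * card hyperplanes < (d - m) ^ m"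
  shows "card C \<le> d * card hyperplanes"
proof -
  obtain D where D: "D \<subseteq> C" "min_deg d D" "card C \<le> card D + d * card (covered C - covered D)"
    using exists_min_deg_subset[OF finite_code] by blast
  have cV: "card (covered C - covered D) \<le> card hyperplanes" by (rule card_mono[OF finite_grass]) (auto simp: covered_def)
  show ?thesis
  proof (cases "D = {}")
    case True
    have "d * card (covered C - covered D) \<le> d * card hyperplanes" using mult_le_mono2[OF cV] .
    moreover have "card D = 0" using True by simp
    ultimately show ?thesis using D(3) by linarith
  next
    case False
    then obtain U0 where U0: "U0 \<in> D" by blast
    have U0G: "U0 \<in> grass n k" using U0 D(1) code_subset_grass by blast
    define v where "v = other_hyperplane U0 {}"
    have vH: "v \<in> hyperplanes" and vU: "v \<subseteq> U0" using other_hyperplane[OF U0G] unfolding v_def by auto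
    have m1: "1 \<le> m" and m2: "2 * m \<le> \<alpha>" using m alpha_ge_3 by auto
    have "(d - m) ^ m \<le> card {ws. is_walk D v ws \<and> length ws = m}"
      using card_walks_ge[OF D(1) vH D(2), of m] U0 vU by blast
    also have "\<dots> \<le> m ^ m * card hyperplanes"
      by (rule card_walks_le[OF D(1) vH]) (rule walk_set_subset_if_same_end[OF D(1) vH D(2) da m1 m2], auto)
    finally show ?thesis using big by simp
  qed
qed

end

context cov_code
begin

lemma card_code_le_root:
  defines "m \<equiv> \<alpha> div 2" and "N \<equiv> real (card hyperplanes)"
  shows "real (card C) \<le> real (\<alpha> + 3 * m + 1) * (N * root m N)"
proof -
  have "m \<ge> 1" using alpha_ge_3 unfolding m_def by simp
  have "N \<ge> 0" unfolding N_def by simp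
  define \<rho> where "\<rho> = root m N"
  have "\<rho> \<ge> 0" unfolding \<rho>_def using \<open>N \<ge> 0\<close> by (rule real_root_ge_zero)
  define r where "r = nat \<lceil>\<rho>\<rceil>"
  have r: "\<rho> \<le> real r" "real r \<le> \<rho> + 1" unfolding r_def using \<open>\<rho> \<ge> 0\<close> by linarith+
  define d where "d = \<alpha> + m + 1 + m * r"
  have "N = \<rho> ^ m" unfolding \<rho>_def using \<open>m \<ge> 1\<close> \<open>N \<ge> 0\<close> by (simp add: real_root_pow_pos2)
  also have "\<dots> \<le> real r ^ m" using r(1) \<open>\<rho> \<ge> 0\<close> by (rule power_mono)
  finally have "real (m ^ m * card hyperplanes) \<le> (real m * real r) ^ m"
    unfolding N_def by (simp add: power_mult_distrib mult_left_mono)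
  also have "\<dots> < (real m * real r + 1) ^ m" using \<open>m \<ge> 1\<close> by (intro power_strict_mono) auto
  also have "\<dots> \<le> real ((d - m) ^ m)" unfolding d_def by (simp add: power_mono)
  finally have "m ^ m * card hyperplanes < (d - m) ^ m" by (simp only: of_nat_less_iff)
  moreover have "\<alpha> \<le> d" unfolding d_def by simp
  ultimately have "card C \<le> d * card hyperplanes"
    using card_code_le m_def by blast
  hence "real (card C) \<le> real d * N" unfolding N_def by (metis of_nat_le_iff of_nat_mult)
  also have "\<dots> \<le> (real \<alpha> + real m + 1 + real m * (\<rho> + 1)) * N"
    using r(2) \<open>N \<ge> 0\<close> unfolding d_def by (intro mult_right_mono) (simp_all add: mult_left_mono)
  also have "\<dots> \<le> real (\<alpha> + 3 * m + 1) * (N * \<rho>)"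
  proof (cases "N = 0")
    case False
    hence "\<rho> \<ge> 1" unfolding \<rho>_def N_def using \<open>m \<ge> 1\<close> by simp
    hence "N \<le> N * \<rho>" using \<open>N \<ge> 0\<close> mult_left_mono[of 1 \<rho> N] by simp
    hence "real (\<alpha> + 2 * m + 1) * N \<le> real (\<alpha> + 2 * m + 1) * (N * \<rho>)" by (rule mult_left_mono) simp
    have "(real \<alpha> + real m + 1 + real m * (\<rho> + 1)) * N = real (\<alpha> + 2 * m + 1) * N + m * (N * \<rho>)"
      by (simp add: algebra_simps)
    also have "\<dots> \<le> real (\<alpha> + 2 * m + 1) * (N * \<rho>) + m * (N * \<rho>)"
      using \<open>real (\<alpha> + 2 * m + 1) * N \<le> _\<close> by (rule add_right_mono)
    also have "\<dots> = real (\<alpha> + 3 * m + 1) * (N * \<rho>)" by (simp add: algebra_simps)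
    finally show ?thesis .
  qed simp
  finally show ?thesis unfolding \<rho>_def .
qed

end

lemma Bq_attained:
  assumes "\<alpha> \<ge> 1"
  obtains C :: "(nat \<Rightarrow> 'a::{finite,field}) set set"
  where "covering_code n k \<delta> \<alpha> C" "Bq TYPE('a) n k \<delta> \<alpha> = card C"
proof -
  let ?S = "{card C | C :: (nat \<Rightarrow> 'a) set set. covering_code n k \<delta> \<alpha> C}"
  have "?S \<subseteq> card ` Pow (grass n k :: (nat \<Rightarrow> 'a) set set)" by (auto simp: covering_code_def)
  hence "finite ?S" using finite_grass finite_subset by blast
  moreover have "covering_code n k \<delta> \<alpha> ({} :: (nat \<Rightarrow> 'a) set set)"
    using assms by (auto simp: covering_code_def)
  hence "?S \<noteq> {}" by blast
  ultimately have "Max ?S \<in> ?S" by (rule Max_in)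
  thus thesis using that unfolding Bq_def by auto
qed

lemma mult_root_self_mono:
  fixes x y :: real
  assumes "0 \<le> x" "x \<le> y" "m > 0"
  shows "x * root m x \<le> y * root m y"
  using assms by (intro mult_mono) (auto simp: real_root_le_iff)

lemma Bq_le_root:
  fixes n k \<delta> \<alpha> :: nat
  assumes "k \<ge> 2" "\<alpha> \<ge> 3" "\<alpha> \<le> \<delta> + 1"
  defines "m \<equiv> \<alpha> div 2" and "N \<equiv> real (card (UNIV :: 'a::{finite,field} set)) ^ ((k - 1) * n)"
  shows "real (Bq TYPE('a) n k \<delta> \<alpha>) \<le> real (\<alpha> + 3 * m + 1) * (N * root m N)"
proof -
  have "\<alpha> \<ge> 1" using assms(2) by simp
  then obtain C :: "(nat \<Rightarrow> 'a) set set"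
    where C: "covering_code n k \<delta> \<alpha> C" "Bq TYPE('a) n k \<delta> \<alpha> = card C"
    by (rule Bq_attained)
  interpret cov_code n k \<delta> \<alpha> C using assms(1-3) C(1) by unfold_locales
  have "real (card hyperplanes) \<le> N"
    unfolding N_def using card_grass_le[of n "k - 1", where 'a='a] by (metis of_nat_le_iff of_nat_power)
  hence "real (card hyperplanes) * root m (card hyperplanes) \<le> N * root m N"
    using assms(2) unfolding m_def by (intro mult_root_self_mono) auto
  thus ?thesis using card_code_le_root C(2) unfolding m_def
    by (smt (verit) mult_left_mono of_nat_0_le_iff)
qed

lemma power_mult_root_eq_powr:
  fixes q :: real
  assumes "q > 0" "m > 0"
  shows "q ^ e * root m (q ^ e) = q powr ((1 + 1 / real m) * real e)"
proof -
  have "root m (q ^ e) = q powr (real e / real m)"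
    using assms by (simp add: root_powr_inverse powr_realpow[symmetric] powr_powr)
  thus ?thesis using assms by (simp add: powr_realpow[symmetric] powr_add[symmetric] algebra_simps add_divide_distrib)
qed

theorem mainTheorem7:
  fixes k \<delta> \<alpha> :: nat
  assumes "k \<ge> 2" and "\<alpha> \<ge> 3" and "\<delta> > 0" and "int \<delta> > int \<alpha> - 2"
  shows "(\<lambda>n. real (Bq TYPE('a::{finite,field}) n k \<delta> \<alpha>))
         \<in> O(\<lambda>n. real (card (UNIV :: 'a set)) powr ((1 + 1 / real (\<alpha> div 2)) * real (k - 1) * real n))"
proof (rule bigoI[where c = "\<alpha> + 3 * (\<alpha> div 2) + 1"], rule always_eventually, rule allI)
  fix n
  let ?q = "real (card (UNIV :: 'a set))"
  have "?q > 0" by (simp add: card_gt_0_iff)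
  moreover have "\<alpha> div 2 > 0" using assms(2) by simp
  ultimately have "?q ^ ((k - 1) * n) * root (\<alpha> div 2) (?q ^ ((k - 1) * n))
      = ?q powr ((1 + 1 / real (\<alpha> div 2)) * real (k - 1) * real n)"
    using power_mult_root_eq_powr by (simp add: mult.assoc)
  moreover have "\<alpha> \<le> \<delta> + 1" using assms(4) by linarith
  ultimately show "norm (real (Bq TYPE('a) n k \<delta> \<alpha>))
      \<le> real (\<alpha> + 3 * (\<alpha> div 2) + 1) * norm (?q powr ((1 + 1 / real (\<alpha> div 2)) * real (k - 1) * real n))"
    using Bq_le_root[OF assms(1,2), of \<delta> n, where 'a='a] by simp
qed

end
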